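(* For every $k\ge1$, $gp_k(\mathbf y)=\hat p^K_k(\mathbf y)\big|_{\beta=-1}$ and $gq_k(\mathbf y)=\hat q^K_k(\mathbf y)\big|_{\beta=-1}$.
   Context: $K$-theoretic formal group law: $u+_Fv=u+v+\beta uv$ with $\beta$ invertible, so $\bar u=-u/(1+\beta u)$. Let $\Delta(t;\mathbf y)=\prod_{j\ge1}\frac{1-\bar t\,y_j}{1-t\,y_j}$ for variables $\mathbf y=(y_1,y_2,\ldots)$. Define the symmetric functions $\hat q^K_k(\mathbf y)$ and $\hat p^K_k(\mathbf y)$ ($k\ge0$) by $\Delta(t;\mathbf y)=\sum_{k\ge0}t^k\hat q^K_k(\mathbf y)=\sum_{k\ge0}[[t]]^k\hat p^K_k(\mathbf y)$, where $[[t]]^0=1$ and $[[t]]^k=(t+_Ft)t^{k-1}=(2t+\beta t^2)t^{k-1}$ for $k\ge1$. For a strict partition $\lambda$, $Tab(\lambda)$ is the set of fillings of the (shifted) diagram of $\lambda$ by the ordered alphabet $1'<1<2'<2<\cdots$ with rows and columns weakly increasing, and $Tab'(\lambda)\subset Tab(\lambda)$ consists of those tableaux in which the leftmost box of every row contains a primed letter. For a tableau $T$ set $\mathbf y^T=\prod_{i}y_i^{T_C(i)}\prod_iy_i^{T_R(i')}$, where $T_C(i)$ is the number of columns of $T$ containing the letter $i$ and $T_R(i')$ is the number of rows of $T$ containing $i'$. Then $gp_\lambda(\mathbf y)=\sum_{T\in Tab'(\lambda)}\mathbf y^T$ and $gq_\lambda(\mathbf y)=\sum_{T\in Tab(\lambda)}\mathbf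 y^T$; $gp_k,gq_k$ denote these for the one-row shape $\lambda=(k)$. *)

theory Defs
  imports "HOL-Computational_Algebra.Formal_Power_Series"
begin

definition fgl_add :: "'a::field \<Rightarrow> 'a fps \<Rightarrow> 'a fps \<Rightarrow> 'a fps" where
  "fgl_add \<beta> u v = u + v + fps_const \<beta> * u * v"

definition fgl_bar :: "'a::field \<Rightarrow> 'a fps \<Rightarrow> 'a fps" where
  "fgl_bar \<beta> u = - u * inverse (1 + fps_const \<beta> * u)"

definition Delta :: "'a::field \<Rightarrow> nat \<Rightarrow> (nat \<Rightarrow> 'a) \<Rightarrow> 'a fps" where
  "Delta \<beta> n y = (\<Prod>j\<in>{1..n}.
      (1 - fgl_bar \<beta> fps_X * fps_const (y j)) * inverse (1 - fps_X * fps_const (y j)))"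

definition dbr :: "'a::field \<Rightarrow> nat \<Rightarrow> 'a fps" where
  "dbr \<beta> k = (if k = 0 then 1 else fgl_add \<beta> fps_X fps_X * fps_X ^ (k - 1))"

definition hat_q :: "'a::field \<Rightarrow> nat \<Rightarrow> (nat \<Rightarrow> 'a) \<Rightarrow> nat \<Rightarrow> 'a" where
  "hat_q \<beta> n y k = fps_nth (Delta \<beta> n y) k"

text \<open>The coefficients of Delta in the basis [[t]]^k (the sum is t-adically convergent,
  so coefficient m only involves k \<le> m).\<close>
definition hat_p :: "'a::field \<Rightarrow> nat \<Rightarrow> (nat \<Rightarrow> 'a) \<Rightarrow> nat \<Rightarrow> 'a" where
  "hat_p \<beta> n y = (THE p. \<forall>m. fps_nth (Delta \<beta> n y) m =
                          fps_nth (\<Sum>k\<le>m. dbr \<beta> k * fps_const (p k)) m)"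

definition strict_partition :: "nat list \<Rightarrow> bool" where
  "strict_partition lam \<longleftrightarrow> sorted_wrt (>) lam \<and> (\<forall>x\<in>set lam. x > 0)"

definition shifted_diagram :: "nat list \<Rightarrow> (nat \<times> nat) set" where
  "shifted_diagram lam = {(i, j). i < length lam \<and> i \<le> j \<and> j < i + lam ! i}"

text \<open>Letters of the alphabet 1' < 1 < 2' < 2 < ... are encoded as positive naturals:
  i' is 2i-1 and i is 2i, so the order is the order on nat and a letter c is primed iff c is odd.
  With n variables y 1..y n (all other variables set to 0) only letters up to 2n contribute.\<close>
definition Tab :: "nat \<Rightarrow> nat list \<Rightarrow> (nat \<times> nat \<Rightarrow> nat) set" where
  "Tab n lam = {T. (\<forall>b. b \<notin> shifted_diagram lam \<longrightarrow> T b = 0)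
      \<and> (\<forall>b\<in>shifted_diagram lam. 1 \<le> T b \<and> T b \<le> 2 * n)
      \<and> (\<forall>i j j'. (i, j) \<in> shifted_diagram lam \<longrightarrow> (i, j') \<in> shifted_diagram lam \<longrightarrow> j \<le> j'
                 \<longrightarrow> T (i, j) \<le> T (i, j'))
      \<and> (\<forall>i i' j. (i, j) \<in> shifted_diagram lam \<longrightarrow> (i', j) \<in> shifted_diagram lam \<longrightarrow> i \<le> i'
                 \<longrightarrow> T (i, j) \<le> T (i', j))}"

definition Tab' :: "nat \<Rightarrow> nat list \<Rightarrow> (nat \<times> nat \<Rightarrow> nat) set" where
  "Tab' n lam = {T \<in> Tab n lam. \<forall>i < length lam. odd (T (i, i))}"

definition TC :: "nat list \<Rightarrow> (nat \<times> nat \<Rightarrow> nat) \<Rightarrow> nat \<Rightarrow> nat" where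
  "TC lam T i = card {j. \<exists>r. (r, j) \<in> shifted_diagram lam \<and> T (r, j) = 2 * i}"

definition TR :: "nat list \<Rightarrow> (nat \<times> nat \<Rightarrow> nat) \<Rightarrow> nat \<Rightarrow> nat" where
  "TR lam T i = card {r. \<exists>j. (r, j) \<in> shifted_diagram lam \<and> T (r, j) = 2 * i - 1}"

definition tab_monomial :: "nat \<Rightarrow> nat list \<Rightarrow> (nat \<Rightarrow> 'a::comm_ring_1) \<Rightarrow> (nat \<times> nat \<Rightarrow> nat) \<Rightarrow> 'a" where
  "tab_monomial n lam y T = (\<Prod>i\<in>{1..n}. y i ^ TC lam T i * y i ^ TR lam T i)"

definition gp :: "nat \<Rightarrow> nat list \<Rightarrow> (nat \<Rightarrow> 'a::comm_ring_1) \<Rightarrow> 'a" where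
  "gp n lam y = (\<Sum>T\<in>Tab' n lam. tab_monomial n lam y T)"

definition gq :: "nat \<Rightarrow> nat list \<Rightarrow> (nat \<Rightarrow> 'a::comm_ring_1) \<Rightarrow> 'a" where
  "gq n lam y = (\<Sum>T\<in>Tab n lam. tab_monomial n lam y T)"

end

theory Submission
  imports Defs "HOL-Library.Multiset"
begin

text \<open>
  A one-row tableau is a weakly increasing word, i.e. a multiset of letters, and its weight is
  multiplicative over the letters: i' contributes y_i once if it occurs at all (all its boxes lie
  in one row), while i contributes y_i for every occurrence (each box is its own column).
  At beta = -1 the factor of Delta for y_i is (1 + y_i t/(1 - t)) / (1 - y_i t), the product of the
  generating series of these two letters, so Delta is the generating function of gq_k.
  Moving one copy of an even minimum i down to i' is a weight-preserving bijection onto the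
  multisets whose primed minimum occurs exactly once, and deleting one copy of a repeated primed
  minimum is one onto the primed-minimum multisets of size k - 1. Hence gq_k = 2 gp_k - gp_(k-1),
  which, as [[t]]^k = t^k (2 - t) at beta = -1, says that the gp_k are the coordinates of Delta in
  the basis [[t]]^k.
\<close>

lemma sum_multisets_of_size_prod_eq_fps_nth:
  fixes g :: "'b \<Rightarrow> nat \<Rightarrow> 'a::comm_ring_1"
  assumes "finite A"
  shows "(\<Sum>M\<in>multisets_of_size A k. \<Prod>a\<in>A. g a (count M a))
       = fps_nth (\<Prod>a\<in>A. Abs_fps (g a)) k"
  using assms
proof (induction A arbitrary: k rule: finite_induct)
  case empty
  then show ?case by (cases k) auto
next
  case (insert a A)
  have weight: "(\<Prod>l\<in>insert a A. g l (count (M + replicate_mset m a) l))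
      = g a m * (\<Prod>l\<in>A. g l (count M l))" if "M \<in> multisets_of_size A j" for M m j
  proof -
    have "count M a = 0"
      using that insert.hyps(2) by (auto simp: multisets_of_size_def count_eq_zero_iff)
    moreover have "(\<Prod>l\<in>A. g l (count (M + replicate_mset m a) l)) = (\<Prod>l\<in>A. g l (count M l))"
      using insert.hyps(2) by (intro prod.cong) auto
    ultimately show ?thesis
      using insert.hyps by simp
  qed
  have "(\<Sum>M\<in>multisets_of_size (insert a A) k. \<Prod>l\<in>insert a A. g l (count M l))
      = (\<Sum>(m, M)\<in>(SIGMA m:{0..k}. multisets_of_size A (k - m)). g a m * (\<Prod>l\<in>A. g l (count M l)))"
    using weight
    by (subst sum.reindex_bij_betw[OF bij_betw_multisets_of_size_insert[OF insert.hyps(2)], symmetric])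
      (auto intro!: sum.cong simp del: count_union count_replicate_mset)
  also have "\<dots> = (\<Sum>m=0..k. g a m * fps_nth (\<Prod>l\<in>A. Abs_fps (g l)) (k - m))"
    using insert.hyps(1)
    by (simp add: sum.Sigma[symmetric] finite_multisets_of_size sum_distrib_left[symmetric] insert.IH)
  also have "\<dots> = fps_nth (\<Prod>l\<in>insert a A. Abs_fps (g l)) k"
    using insert.hyps by (simp add: fps_mult_nth)
  finally show ?case .
qed

definition letter_weight :: "(nat \<Rightarrow> 'a::comm_ring_1) \<Rightarrow> nat \<Rightarrow> nat \<Rightarrow> 'a" where
  "letter_weight y l m = (if odd l then (if m = 0 then 1 else y ((l + 1) div 2)) else y (l div 2) ^ m)"

lemma prod_atLeastAtMost_double:
  "(\<Prod>l\<in>{1..2 * n}. f l) = (\<Prod>i\<in>{1..n::nat}. f (2 * i - 1) * f (2 * i))"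
  by (induction n) (simp_all add: prod.cl_ivl_Suc mult.assoc)

lemma inverse_one_minus_fps_X_times_const:
  fixes a :: "'a::field"
  shows "inverse (1 - fps_X * fps_const a) = Abs_fps (\<lambda>m. a ^ m)"
proof (rule fps_inverse_unique)
  show "(1 - fps_X * fps_const a) * Abs_fps (\<lambda>m. a ^ m) = 1"
    by (rule fps_ext) (simp add: algebra_simps mult.assoc power_eq_if)
qed

lemma one_minus_fgl_bar_minus_one:
  fixes a :: "'a::field"
  shows "1 - fgl_bar (-1) fps_X * fps_const a = Abs_fps (\<lambda>m. if m = 0 then 1 else a)"
proof -
  have "fgl_bar (-1) fps_X = - fps_X * Abs_fps (\<lambda>_. 1::'a)"
    using inverse_one_minus_fps_X_times_const[of "1::'a"]
    by (simp add: fgl_bar_def fps_const_neg[symmetric] del: fps_const_neg)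
  then show ?thesis
    by (intro fps_ext) (simp add: algebra_simps mult.assoc)
qed

lemma Delta_minus_one_eq_prod_letters:
  "Delta (-1) n y = (\<Prod>l\<in>{1..2 * n}. Abs_fps (letter_weight y l))"
proof -
  have "Abs_fps (letter_weight y (2 * i - 1)) * Abs_fps (letter_weight y (2 * i))
      = (1 - fgl_bar (-1) fps_X * fps_const (y i)) * inverse (1 - fps_X * fps_const (y i))"
    if "i \<ge> 1" for i
  proof -
    have "letter_weight y (2 * i - 1) = (\<lambda>m. if m = 0 then 1 else y i)"
      using that by (auto simp: letter_weight_def fun_eq_iff)
    moreover have "letter_weight y (2 * i) = (\<lambda>m. y i ^ m)"
      by (auto simp: letter_weight_def fun_eq_iff)
    ultimately show ?thesis
      by (simp add: one_minus_fgl_bar_minus_one inverse_one_minus_fps_X_times_const)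
  qed
  then show ?thesis
    unfolding Delta_def prod_atLeastAtMost_double by (auto intro!: prod.cong)
qed

definition mset_weight :: "nat \<Rightarrow> (nat \<Rightarrow> 'a::comm_ring_1) \<Rightarrow> nat multiset \<Rightarrow> 'a" where
  "mset_weight n y M = (\<Prod>l\<in>{1..2 * n}. letter_weight y l (count M l))"

definition row_mset :: "nat \<Rightarrow> (nat \<times> nat \<Rightarrow> nat) \<Rightarrow> nat multiset" where
  "row_mset k T = mset (map (\<lambda>j. T (0, j)) [0..<k])"

lemma shifted_diagram_single_row: "(i, j) \<in> shifted_diagram [k] \<longleftrightarrow> i = 0 \<and> j < k"
  by (auto simp: shifted_diagram_def)

lemma Tab_single_row_iff:
  "T \<in> Tab n [k] \<longleftrightarrow> (\<forall>i j. \<not> (i = 0 \<and> j < k) \<longrightarrow> T (i, j) = 0)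
     \<and> (\<forall>j<k. T (0, j) \<in> {1..2 * n})
     \<and> sorted (map (\<lambda>j. T (0, j)) [0..<k])"
  unfolding Tab_def sorted_iff_nth_mono by (auto simp: shifted_diagram_single_row)

lemma bij_betw_row_mset: "bij_betw (row_mset k) (Tab n [k]) (multisets_of_size {1..2 * n} k)"
proof (rule bij_betw_byWitness)
  define row_of :: "nat multiset \<Rightarrow> nat \<times> nat \<Rightarrow> nat" where
    "row_of M = (\<lambda>(i, j). if i = 0 \<and> j < k then sorted_list_of_multiset M ! j else 0)" for M
  have length_sorted: "length (sorted_list_of_multiset M) = size M" for M :: "nat multiset"
    by (metis mset_sorted_list_of_multiset size_mset)
  have row_of_row: "map (\<lambda>j. row_of M (0, j)) [0..<k] = sorted_list_of_multiset M"
    if "M \<in> multisets_of_size {1..2 * n} k" for M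
    using that length_sorted by (intro nth_equalityI) (auto simp: row_of_def multisets_of_size_def)
  show "\<forall>T\<in>Tab n [k]. row_of (row_mset k T) = T"
  proof
    fix T assume T: "T \<in> Tab n [k]"
    then have "sorted_list_of_multiset (row_mset k T) = map (\<lambda>j. T (0, j)) [0..<k]"
      unfolding row_mset_def sorted_list_of_multiset_mset Tab_single_row_iff
      by (simp add: sorted_sort_id del: mset_map)
    with T show "row_of (row_mset k T) = T"
      by (auto simp: row_of_def Tab_single_row_iff)
  qed
  show "\<forall>M\<in>multisets_of_size {1..2 * n} k. row_mset k (row_of M) = M"
    by (simp add: row_mset_def row_of_row)
  show "row_mset k ` Tab n [k] \<subseteq> multisets_of_size {1..2 * n} k"
    by (auto simp: row_mset_def Tab_single_row_iff multisets_of_size_def)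
  show "row_of ` multisets_of_size {1..2 * n} k \<subseteq> Tab n [k]"
  proof
    fix T assume "T \<in> row_of ` multisets_of_size {1..2 * n} k"
    then obtain M where M: "M \<in> multisets_of_size {1..2 * n} k" and T: "T = row_of M" by blast
    have "T (0, j) \<in> {1..2 * n}" if "j < k" for j
      using M that nth_mem[of j "sorted_list_of_multiset M"]
      by (auto simp: T row_of_def multisets_of_size_def length_sorted)
    with M show "T \<in> Tab n [k]"
      by (auto simp: Tab_single_row_iff T row_of_row) (auto simp: row_of_def)
  qed
qed

lemma count_row_mset: "count (row_mset k T) l = card {j. j < k \<and> T (0, j) = l}"
  unfolding row_mset_def count_mset count_list_eq_length_filter length_filter_conv_card
  by (rule arg_cong[where f = card]) auto

lemma tab_monomial_single_row: "tab_monomial n [k] y T = mset_weight n y (row_mset k T)"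
proof -
  have TC: "TC [k] T i = count (row_mset k T) (2 * i)" for i
    unfolding TC_def count_row_mset shifted_diagram_single_row by (rule arg_cong[where f = card]) auto
  have "{r. \<exists>j. (r, j) \<in> shifted_diagram [k] \<and> T (r, j) = l}
      = (if l \<in># row_mset k T then {0} else {})" for l
    by (auto simp: shifted_diagram_single_row row_mset_def)
  then have TR: "TR [k] T i = (if count (row_mset k T) (2 * i - 1) = 0 then 0 else 1)" for i
    by (simp add: TR_def count_eq_zero_iff)
  have "y i ^ TC [k] T i * y i ^ TR [k] T i
      = letter_weight y (2 * i - 1) (count (row_mset k T) (2 * i - 1))
        * letter_weight y (2 * i) (count (row_mset k T) (2 * i))" if "i \<ge> 1" for i
    using that by (simp add: TC TR letter_weight_def count_eq_zero_iff)
  then show ?thesis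
    unfolding tab_monomial_def mset_weight_def prod_atLeastAtMost_double by (auto intro!: prod.cong)
qed

lemma Min_row_mset:
  assumes "T \<in> Tab n [k]" "k \<ge> 1"
  shows "Min_mset (row_mset k T) = T (0, 0)"
proof (rule Min_eqI)
  show "T (0, 0) \<in># row_mset k T"
    using assms(2) by (force simp: row_mset_def)
  fix l assume "l \<in># row_mset k T"
  then show "T (0, 0) \<le> l"
    using assms(1) by (auto simp: row_mset_def Tab_def shifted_diagram_single_row)
qed simp

definition odd_min_msets :: "nat \<Rightarrow> nat \<Rightarrow> nat multiset set" where
  "odd_min_msets n k = {M \<in> multisets_of_size {1..2 * n} k. odd (Min_mset M)}"

lemma gq_single_row: "gq n [k] y = (\<Sum>M\<in>multisets_of_size {1..2 * n} k. mset_weight n y M)"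
  unfolding gq_def tab_monomial_single_row by (rule sum.reindex_bij_betw[OF bij_betw_row_mset])

lemma gp_single_row:
  assumes "k \<ge> 1"
  shows "gp n [k] y = sum (mset_weight n y) (odd_min_msets n k)"
proof -
  have "Tab' n [k] = {T \<in> Tab n [k]. odd (Min_mset (row_mset k T))}"
    using assms by (auto simp: Tab'_def Min_row_mset)
  then have "bij_betw (row_mset k) (Tab' n [k]) (odd_min_msets n k)"
    using bij_betw_row_mset[of k n] unfolding bij_betw_def inj_on_def odd_min_msets_def by auto
  then show ?thesis
    unfolding gp_def tab_monomial_single_row by (rule sum.reindex_bij_betw)
qed

lemma fps_nth_Delta_minus_one: "fps_nth (Delta (-1) n y) k = gq n [k] y"
  unfolding Delta_minus_one_eq_prod_letters gq_single_row mset_weight_def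
  by (rule sum_multisets_of_size_prod_eq_fps_nth[symmetric]) simp

lemma gq_empty_row: "gq n [0] y = 1"
proof -
  have "letter_weight y l 0 = 1" for l
    by (simp add: letter_weight_def)
  then show ?thesis
    by (simp add: gq_single_row mset_weight_def)
qed

lemma Min_mset_add_mset_lower_bound:
  "(\<And>x. x \<in># M \<Longrightarrow> a \<le> x) \<Longrightarrow> Min_mset (add_mset a M) = a"
  by (rule Min_eqI) auto

lemma add_mset_diff_in_multisets_of_size:
  assumes "M \<in> multisets_of_size A k" "x \<in># M" "a \<in> A"
  shows "add_mset a (M - {#x#}) \<in> multisets_of_size A k"
proof -
  have "size M > 0"
    using assms(2) nonempty_has_size by fastforce
  with assms show ?thesis
    by (auto simp: multisets_of_size_def size_Diff_singleton dest: in_diffD)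
qed

lemma prod_cong_off_pair:
  assumes "finite A" "a \<in> A" "b \<in> A" "a \<noteq> b"
    and "\<And>l. l \<in> A - {a, b} \<Longrightarrow> f l = g l" "f a * f b = g a * g b"
  shows "prod f A = prod g A"
proof -
  have split: "prod h A = prod h (A - {a, b}) * (h a * h b)" for h :: "'a \<Rightarrow> 'b"
    using assms(1-4) prod.subset_diff[of "{a, b}" A h] by simp
  have "prod f (A - {a, b}) = prod g (A - {a, b})"
    using assms(5) by (rule prod.cong[OF refl])
  then show ?thesis
    using assms(6) split[of f] split[of g] by simp
qed

lemma multisets_of_size_Min:
  assumes "M \<in> multisets_of_size A k" "k \<ge> 1"
  shows "M \<noteq> {#}" "Min_mset M \<in># M" "Min_mset M \<in> A"
proof -
  show "M \<noteq> {#}"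
    using assms by (auto simp: multisets_of_size_def)
  then show "Min_mset M \<in># M" "Min_mset M \<in> A"
    using assms(1) by (auto simp: multisets_of_size_def)
qed

lemma mset_weight_lower_even_min:
  assumes "M \<in> multisets_of_size {1..2 * n} k" "k \<ge> 1" and even: "even (Min_mset M)"
  shows "mset_weight n y (add_mset (Min_mset M - 1) (M - {#Min_mset M#})) = mset_weight n y M"
proof -
  define m where "m = Min_mset M"
  have m: "m \<in># M" "m \<in> {1..2 * n}" "even m"
    using multisets_of_size_Min[OF assms(1,2)] even by (simp_all add: m_def)
  then have "m \<ge> 2"
    by (auto elim: evenE)
  have "count M (m - 1) = 0"
    using \<open>m \<ge> 2\<close> unfolding m_def by (auto simp: count_eq_zero_iff dest: Min_le[rotated])
  have letters: "m - 1 \<in> {1..2 * n}" "odd (m - 1)" "(m - 1 + 1) div 2 = m div 2"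
    using m \<open>m \<ge> 2\<close> by auto
  have "count M m \<ge> 1"
    using m(1) by (simp add: Suc_le_eq)
  \<comment> \<open>moving one copy of the even minimum 2i down to i' trades a column factor y_i for a row factor y_i\<close>
  then have "letter_weight y m (count M m - 1) * letter_weight y (m - 1) 1
      = letter_weight y m (count M m) * letter_weight y (m - 1) (count M (m - 1))"
    using letters m(3) \<open>count M (m - 1) = 0\<close>
    by (cases "count M m") (simp_all add: letter_weight_def)
  moreover have "m \<noteq> m - 1"
    using \<open>m \<ge> 2\<close> by simp
  ultimately show ?thesis
    unfolding mset_weight_def m_def[symmetric]
    using m letters \<open>count M (m - 1) = 0\<close>
    by (intro prod_cong_off_pair[where a = m and b = "m - 1"]) simp_all
qed

lemma mset_weight_remove_odd_min:
  assumes "odd (Min_mset M)" "count M (Min_mset M) \<ge> 2"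
  shows "mset_weight n y (M - {#Min_mset M#}) = mset_weight n y M"
  unfolding mset_weight_def
proof (intro prod.cong refl)
  fix l
  show "letter_weight y l (count (M - {#Min_mset M#}) l) = letter_weight y l (count M l)"
    using assms by (cases "l = Min_mset M") (simp_all add: letter_weight_def)
qed

lemma lower_even_min:
  assumes "M \<in> multisets_of_size {1..2 * n} k" "k \<ge> 1" "even (Min_mset M)"
  defines "L \<equiv> add_mset (Min_mset M - 1) (M - {#Min_mset M#})"
  shows "L \<in> odd_min_msets n k" "Min_mset L = Min_mset M - 1" "count L (Min_mset L) = 1"
proof -
  define m where "m = Min_mset M"
  have m: "m \<in># M" "m \<in> {1..2 * n}" "even m"
    using multisets_of_size_Min[OF assms(1,2)] assms(3) by (simp_all add: m_def)
  then have "m \<ge> 2"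
    by (auto elim: evenE)
  have above: "m - 1 < x" if "x \<in># M" for x
  proof -
    have "m \<le> x"
      using that by (simp add: m_def)
    with \<open>m \<ge> 2\<close> show ?thesis by simp
  qed
  show min: "Min_mset L = Min_mset M - 1"
    unfolding L_def m_def[symmetric]
    by (intro Min_mset_add_mset_lower_bound) (meson above in_diffD less_imp_le)
  have "L \<in> multisets_of_size {1..2 * n} k"
    unfolding L_def m_def[symmetric]
    using assms(1) m \<open>m \<ge> 2\<close> by (intro add_mset_diff_in_multisets_of_size) auto
  then show "L \<in> odd_min_msets n k"
    using min m(3) \<open>m \<ge> 2\<close> by (simp add: odd_min_msets_def m_def)
  have "count M (m - 1) = 0"
    using above by (auto simp: count_eq_zero_iff)
  then show "count L (Min_mset L) = 1"
    using min by (simp add: L_def m_def)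
qed

lemma raise_simple_odd_min:
  assumes "M \<in> odd_min_msets n k" "k \<ge> 1" "count M (Min_mset M) = 1"
  defines "R \<equiv> add_mset (Min_mset M + 1) (M - {#Min_mset M#})"
  shows "R \<in> multisets_of_size {1..2 * n} k - odd_min_msets n k" "Min_mset R = Min_mset M + 1"
proof -
  define m where "m = Min_mset M"
  have M: "M \<in> multisets_of_size {1..2 * n} k" "odd m"
    using assms(1) by (simp_all add: odd_min_msets_def m_def)
  have m: "m \<in># M" "m \<in> {1..2 * n}"
    using multisets_of_size_Min[OF M(1) assms(2)] by (simp_all add: m_def)
  then have "m + 1 \<in> {1..2 * n}"
    using M(2) by (cases "m = 2 * n") auto
  have "m + 1 \<le> x" if "x \<in># M - {#m#}" for x
  proof -
    have "m \<le> x"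
      using in_diffD[OF that] by (simp add: m_def)
    moreover have "x \<noteq> m"
      using that assms(3) by (auto simp: in_diff_count m_def)
    ultimately show ?thesis by simp
  qed
  then show min: "Min_mset R = Min_mset M + 1"
    unfolding R_def m_def[symmetric] by (rule Min_mset_add_mset_lower_bound)
  have "R \<in> multisets_of_size {1..2 * n} k"
    unfolding R_def m_def[symmetric]
    using M(1) m \<open>m + 1 \<in> {1..2 * n}\<close> by (intro add_mset_diff_in_multisets_of_size) auto
  then show "R \<in> multisets_of_size {1..2 * n} k - odd_min_msets n k"
    using min M(2) by (simp add: odd_min_msets_def m_def)
qed

lemma sum_even_min_eq_sum_simple_odd_min:
  assumes "k \<ge> 1"
  shows "(\<Sum>M\<in>multisets_of_size {1..2 * n} k - odd_min_msets n k. mset_weight n y M)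
       = (\<Sum>M | M \<in> odd_min_msets n k \<and> count M (Min_mset M) = 1. mset_weight n y M)"
proof -
  define lower :: "nat multiset \<Rightarrow> nat multiset" where
    "lower M = add_mset (Min_mset M - 1) (M - {#Min_mset M#})" for M
  define raise :: "nat multiset \<Rightarrow> nat multiset" where
    "raise M = add_mset (Min_mset M + 1) (M - {#Min_mset M#})" for M
  show ?thesis
  proof (rule sum.reindex_bij_witness[where j = lower and i = raise])
    fix M assume "M \<in> multisets_of_size {1..2 * n} k - odd_min_msets n k"
    then have M: "M \<in> multisets_of_size {1..2 * n} k" "even (Min_mset M)"
      by (auto simp: odd_min_msets_def)
    note lower = lower_even_min[OF M(1) assms M(2), folded lower_def]
    have "Min_mset M \<in># M"
      using multisets_of_size_Min[OF M(1) assms] by simp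
    moreover have "1 \<le> Min_mset M" "Min_mset M \<noteq> 1"
      using multisets_of_size_Min[OF M(1) assms] M(2) by auto
    then have "Min_mset M \<ge> 2"
      by linarith
    ultimately show "raise (lower M) = M"
      using lower(2) by (simp add: raise_def) (simp add: lower_def)
    show "lower M \<in> {M. M \<in> odd_min_msets n k \<and> count M (Min_mset M) = 1}"
      using lower(1,3) by simp
    show "mset_weight n y (lower M) = mset_weight n y M"
      unfolding lower_def using M(1) assms M(2) by (rule mset_weight_lower_even_min)
  next
    fix M assume "M \<in> {M. M \<in> odd_min_msets n k \<and> count M (Min_mset M) = 1}"
    then have M: "M \<in> odd_min_msets n k" "count M (Min_mset M) = 1"
      by simp_all
    note raise = raise_simple_odd_min[OF M(1) assms M(2), folded raise_def]
    have "Min_mset M \<in># M"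
      using M(1) multisets_of_size_Min(2)[OF _ assms] by (auto simp: odd_min_msets_def)
    then show "lower (raise M) = M"
      using raise(2) by (simp add: lower_def) (simp add: raise_def)
    show "raise M \<in> multisets_of_size {1..2 * n} k - odd_min_msets n k"
      by (rule raise(1))
  qed
qed

lemma sum_repeated_odd_min_eq_sum_odd_min:
  assumes "k \<ge> 2"
  shows "(\<Sum>M | M \<in> odd_min_msets n k \<and> count M (Min_mset M) \<noteq> 1. mset_weight n y M)
       = (\<Sum>M\<in>odd_min_msets n (k - 1). mset_weight n y M)"
proof (rule sum.reindex_bij_witness[where j = "\<lambda>M. M - {#Min_mset M#}"
      and i = "\<lambda>M. add_mset (Min_mset M) M"])
  fix M assume M: "M \<in> {M. M \<in> odd_min_msets n k \<and> count M (Min_mset M) \<noteq> 1}"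
  define m where "m = Min_mset M"
  have m: "m \<in># M" "odd m" "count M m \<noteq> 1"
    using M multisets_of_size_Min[of M "{1..2 * n}" k] assms by (auto simp: m_def odd_min_msets_def)
  then have "count M m \<ge> 2"
    by (simp add: Suc_le_eq numeral_2_eq_2 le_neq_implies_less)
  have min: "Min_mset (M - {#m#}) = m"
  proof (rule Min_eqI)
    show "m \<in># M - {#m#}"
      using \<open>count M m \<ge> 2\<close> by (simp add: in_diff_count)
  qed (auto simp: m_def dest: in_diffD)
  show "add_mset (Min_mset (M - {#Min_mset M#})) (M - {#Min_mset M#}) = M"
    using min m(1) by (simp add: m_def[symmetric])
  show "M - {#Min_mset M#} \<in> odd_min_msets n (k - 1)"
    using M m min by (auto simp: m_def[symmetric] odd_min_msets_def multisets_of_size_def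
        size_Diff_singleton dest: in_diffD)
  show "mset_weight n y (M - {#Min_mset M#}) = mset_weight n y M"
    using m(2) \<open>count M m \<ge> 2\<close> by (intro mset_weight_remove_odd_min) (simp_all add: m_def)
next
  fix M assume M: "M \<in> odd_min_msets n (k - 1)"
  have "Min_mset M \<in># M"
    using M multisets_of_size_Min[of M "{1..2 * n}" "k - 1"] assms by (auto simp: odd_min_msets_def)
  then have min: "Min_mset (add_mset (Min_mset M) M) = Min_mset M"
    by (simp add: insert_absorb)
  then show "add_mset (Min_mset M) M - {#Min_mset (add_mset (Min_mset M) M)#} = M"
    by simp
  show "add_mset (Min_mset M) M \<in> {M. M \<in> odd_min_msets n k \<and> count M (Min_mset M) \<noteq> 1}"
    using M assms min \<open>Min_mset M \<in># M\<close> by (auto simp: odd_min_msets_def multisets_of_size_def)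
qed

lemma gq_single_row_recursion:
  assumes "k \<ge> 1"
  shows "gq n [k] y = 2 * gp n [k] y - (if k \<ge> 2 then gp n [k - 1] y else 0)"
proof -
  let ?w = "mset_weight n y" and ?A = "multisets_of_size {1..2 * n} k"
  let ?simple = "{M \<in> odd_min_msets n k. count M (Min_mset M) = 1}"
  and ?repeated = "{M \<in> odd_min_msets n k. count M (Min_mset M) \<noteq> 1}"
  have fin: "finite ?A"
    by (simp add: finite_multisets_of_size)
  have "gq n [k] y = sum ?w (?A - odd_min_msets n k) + sum ?w (odd_min_msets n k)"
    unfolding gq_single_row using fin
    by (intro sum.subset_diff) (auto simp: odd_min_msets_def)
  also have "sum ?w (?A - odd_min_msets n k) = sum ?w ?simple"
    using assms by (rule sum_even_min_eq_sum_simple_odd_min)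
  also have "sum ?w ?simple = sum ?w (odd_min_msets n k) - sum ?w ?repeated"
  proof -
    have "finite (odd_min_msets n k)"
      using fin by (simp add: odd_min_msets_def)
    moreover have "odd_min_msets n k \<inter> {M. count M (Min_mset M) = 1} = ?simple"
      and "odd_min_msets n k - {M. count M (Min_mset M) = 1} = ?repeated"
      by auto
    ultimately show ?thesis
      using sum.Int_Diff[of "odd_min_msets n k" ?w "{M. count M (Min_mset M) = 1}"] by simp
  qed
  also have "sum ?w ?repeated = (if k \<ge> 2 then gp n [k - 1] y else 0)"
  proof (cases "k \<ge> 2")
    case True
    then show ?thesis
      using sum_repeated_odd_min_eq_sum_odd_min[OF True, of n y] gp_single_row[of "k - 1" n y] by simp
  next
    case False
    have "count M (Min_mset M) = 1" if "M \<in> odd_min_msets n k" for M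
    proof -
      have "size M = 1"
        using that False assms by (simp add: odd_min_msets_def multisets_of_size_def)
      then obtain a where "M = {#a#}"
        using size_1_singleton_mset by blast
      then show ?thesis by simp
    qed
    then have "?repeated = {}"
      by auto
    then show ?thesis
      using False by (simp only: sum.empty if_False)
  qed
  finally show ?thesis
    using gp_single_row[OF assms, of n y] by simp
qed

lemma fps_nth_dbr_minus_one:
  "fps_nth (dbr (-1 :: 'a::field) k) m =
     (if k = 0 then (if m = 0 then 1 else 0) else if m = k then 2 else if m = k + 1 then -1 else 0)"
proof (cases k)
  case (Suc j)
  have "dbr (-1 :: 'a) (Suc j) = fps_X ^ Suc j + fps_X ^ Suc j - fps_X ^ Suc (Suc j)"
    by (simp add: dbr_def fgl_add_def algebra_simps fps_const_neg[symmetric] del: fps_const_neg)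
  then have "dbr (-1 :: 'a) k = fps_X ^ k + fps_X ^ k - fps_X ^ (k + 1)"
    by (simp add: Suc)
  then show ?thesis
    using Suc by (simp only: fps_add_nth fps_sub_nth fps_X_power_nth) auto
qed (simp add: dbr_def)

lemma fps_nth_sum_dbr_minus_one:
  "fps_nth (\<Sum>k\<le>m. dbr (-1) k * fps_const (p k)) m =
     (if m = 0 then p 0 else 2 * p m - (if m \<ge> 2 then p (m - 1) else (0 :: 'a::field)))"
proof -
  have "fps_nth (\<Sum>k\<le>m. dbr (-1) k * fps_const (p k)) m = (\<Sum>k\<le>m. fps_nth (dbr (-1) k) m * p k)"
    by (simp add: fps_sum_nth)
  also have "\<dots> = (\<Sum>k\<in>{m - 1, m}. fps_nth (dbr (-1) k) m * p k)"
    by (rule sum.mono_neutral_right) (auto simp: fps_nth_dbr_minus_one)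
  finally show ?thesis
    by (auto simp: fps_nth_dbr_minus_one)
qed

lemma hat_p_minus_one_eqI:
  fixes p :: "nat \<Rightarrow> 'a::field_char_0"
  assumes "\<And>m. fps_nth (Delta (-1) n y) m = fps_nth (\<Sum>k\<le>m. dbr (-1) k * fps_const (p k)) m"
  shows "hat_p (-1) n y = p"
  unfolding hat_p_def
proof (rule the_equality)
  show "\<forall>m. fps_nth (Delta (-1) n y) m = fps_nth (\<Sum>k\<le>m. dbr (-1) k * fps_const (p k)) m"
    using assms by blast
  fix q assume "\<forall>m. fps_nth (Delta (-1) n y) m = fps_nth (\<Sum>k\<le>m. dbr (-1) k * fps_const (q k)) m"
  then have same: "fps_nth (\<Sum>k\<le>m. dbr (-1) k * fps_const (q k)) m
      = fps_nth (\<Sum>k\<le>m. dbr (-1) k * fps_const (p k)) m" for m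
    using assms by simp
  show "q = p"
  proof
    fix m show "q m = p m"
    proof (induction m rule: less_induct)
      case (less m)
      then show ?case
        using same[of m] by (auto simp: fps_nth_sum_dbr_minus_one split: if_splits)
    qed
  qed
qed

theorem mainTheorem10:
  fixes y :: "nat \<Rightarrow> 'a::field_char_0" and n k :: nat
  assumes "k \<ge> 1"
  shows "gp n [k] y = hat_p (-1) n y k \<and> gq n [k] y = hat_q (-1) n y k"
proof
  define p where "p m = (if m = 0 then 1 else gp n [m] y)" for m
  have "fps_nth (Delta (-1) n y) m = fps_nth (\<Sum>j\<le>m. dbr (-1) j * fps_const (p j)) m" for m
  proof (cases "m = 0")
    case True
    then show ?thesis
      by (simp add: fps_nth_Delta_minus_one gq_empty_row dbr_def p_def)
  next
    case False
    then show ?thesis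
      unfolding fps_nth_Delta_minus_one fps_nth_sum_dbr_minus_one
      by (simp add: gq_single_row_recursion p_def)
  qed
  then have "hat_p (-1) n y = p"
    by (rule hat_p_minus_one_eqI)
  then show "gp n [k] y = hat_p (-1) n y k"
    using assms by (simp add: p_def)
  show "gq n [k] y = hat_q (-1) n y k"
    by (simp add: hat_q_def fps_nth_Delta_minus_one)
qed

end
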